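(* Let $\mathcal{H},\mathcal{K}$ be complex Hilbert spaces with $\dim\mathcal{H}>0$, let $(f_*,f^* ):(\mathsf{P}(\mathcal{H}),\mathsf{L}(\mathcal{H}),\bar e_{\mathcal{H}})\to(\mathsf{P}(\mathcal{K}),\mathsf{L}(\mathcal{K}),\bar e_{\mathcal{K}})$ be a Chu morphism, and let $(g,\sigma)$ be a semilinear map $\mathcal{H}\to\mathcal{K}$ with $g(\psi)\ne0$ and $f_*([\psi])=[g(\psi)]$ for all nonzero $\psi\in\mathcal{H}$. If the field endomorphism $\sigma:\mathbb{C}\to\mathbb{C}$ is surjective, then $g$ is surjective.
   Context: A Chu morphism $(X,A,e)\to(X',A',e')$ between Chu spaces over $[0,1]$ (with $e:X\times A\to[0,1]$) is a pair $(f_*:X\to X',f^*:A'\to A)$ with $e(x,f^*(a'))=e'(f_*(x),a')$ for all $x,a'$. For a complex Hilbert space $\mathcal{H}$: $\mathsf{L}(\mathcal{H})$ is the set of closed subspaces, $P_S$ the orthogonal projector onto $S$, $\mathsf{P}(\mathcal{H})$ the set of rays $[\psi]=\{\lambda\psi:\lambda\in\mathbb{C}\}$, $\psi\ne0$, and $\bar e_{\mathcal{H}}([\psi],S)=\|P_S\psi\|^2/\|\psi\|^2$. A semilinear map $(g,\sigma):V_1\to V_2$ consists of a field homomorphism $\sigma:\mathbb{C}\to\mathbb{C}$ and an additive map $g$ with $g(\lambda v)=\sigma(\lambda)g(v)$. *)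

theory Defs
  imports "HOL-Analysis.Analysis"
begin

text \<open>A complex Hilbert space: a complete real inner product space carrying a complex
  scalar multiplication (compatible with the real one) and a complex inner product
  (conjugate-linear in the first argument, Hermitian) whose real part is the real inner
  product; hence norm x = sqrt (Re (cinner x x)).\<close>

class chilbert_space = real_inner + complete_space +
  fixes cscale :: "complex \<Rightarrow> 'a \<Rightarrow> 'a"
    and cinner :: "'a \<Rightarrow> 'a \<Rightarrow> complex"
  assumes cscale_add_right: "cscale c (x + y) = cscale c x + cscale c y"
    and cscale_add_left: "cscale (c + d) x = cscale c x + cscale d x"
    and cscale_cscale: "cscale c (cscale d x) = cscale (c * d) x"
    and cscale_one: "cscale 1 x = x"
    and scaleR_cscale: "scaleR r x = cscale (complex_of_real r) x"
    and cinner_commute: "cinner x y = cnj (cinner y x)"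
    and cinner_add_left: "cinner (x + y) z = cinner x z + cinner y z"
    and cinner_cscale_left: "cinner (cscale c x) y = cnj c * cinner x y"
    and inner_Re_cinner: "inner x y = Re (cinner x y)"

definition csubspace :: "'a::chilbert_space set \<Rightarrow> bool" where
  "csubspace S \<longleftrightarrow> 0 \<in> S \<and> (\<forall>x\<in>S. \<forall>y\<in>S. x + y \<in> S) \<and> (\<forall>c. \<forall>x\<in>S. cscale c x \<in> S)"

definition closed_subspaces :: "'a::chilbert_space set set" where
  "closed_subspaces = {S. csubspace S \<and> closed S}"

definition proj :: "'a::chilbert_space set \<Rightarrow> 'a \<Rightarrow> 'a" where
  "proj S \<psi> = (THE p. p \<in> S \<and> (\<forall>s\<in>S. cinner s (\<psi> - p) = 0))"

definition ray :: "'a::chilbert_space \<Rightarrow> 'a set" where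
  "ray \<psi> = range (\<lambda>c. cscale c \<psi>)"

definition rays :: "'a::chilbert_space set set" where
  "rays = {ray \<psi> | \<psi>. \<psi> \<noteq> 0}"

text \<open>The evaluation ebar([psi], S) = norm (P_S psi)^2 / norm psi^2, for a chosen
  nonzero representative psi of the ray (independent of the choice).\<close>
definition ebar :: "'a::chilbert_space set \<Rightarrow> 'a set \<Rightarrow> real" where
  "ebar r S = (let \<psi> = (SOME \<psi>. \<psi> \<noteq> 0 \<and> ray \<psi> = r)
               in (norm (proj S \<psi>))\<^sup>2 / (norm \<psi>)\<^sup>2)"

definition chu_morphism ::
  "'x set \<Rightarrow> 'a set \<Rightarrow> ('x \<Rightarrow> 'a \<Rightarrow> real) \<Rightarrow>
   'y set \<Rightarrow> 'b set \<Rightarrow> ('y \<Rightarrow> 'b \<Rightarrow> real) \<Rightarrow>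
   ('x \<Rightarrow> 'y) \<Rightarrow> ('b \<Rightarrow> 'a) \<Rightarrow> bool" where
  "chu_morphism X A e X' A' e' f_low f_up \<longleftrightarrow>
     (\<forall>x\<in>X. f_low x \<in> X') \<and> (\<forall>a'\<in>A'. f_up a' \<in> A) \<and>
     (\<forall>x\<in>X. \<forall>a'\<in>A'. e x (f_up a') = e' (f_low x) a')"

definition field_hom :: "(complex \<Rightarrow> complex) \<Rightarrow> bool" where
  "field_hom \<sigma> \<longleftrightarrow> (\<forall>a b. \<sigma> (a + b) = \<sigma> a + \<sigma> b) \<and>
                     (\<forall>a b. \<sigma> (a * b) = \<sigma> a * \<sigma> b) \<and> \<sigma> 1 = 1"

definition semilinear ::
  "('a::chilbert_space \<Rightarrow> 'b::chilbert_space) \<Rightarrow> (complex \<Rightarrow> complex) \<Rightarrow> bool" where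
  "semilinear g \<sigma> \<longleftrightarrow> field_hom \<sigma> \<and> (\<forall>x y. g (x + y) = g x + g y) \<and>
                       (\<forall>c x. g (cscale c x) = cscale (\<sigma> c) (g x))"

end

theory Submission
  imports Defs
begin

text \<open>Suppose some k is not in the range of g and let T = f^*([k]). If a nonzero \<psi> lay in T,
  then ebar([g \<psi>], [k]) = ebar([\<psi>], T) = 1 would force g \<psi> = a k with a \<noteq> 0, and the
  surjectivity of \<sigma> would put k = g(d \<psi>) where \<sigma> d = 1/a into the range. Hence T = 0, so
  ebar([g \<psi>], [k]) = 0, i.e. k is orthogonal to the whole range of g. The same then holds for
  k + g \<psi>0, which is not in the (additively closed) range either; subtracting gives
  g \<psi>0 \<perp> g \<psi>0, contradicting g \<psi>0 \<noteq> 0.\<close>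

interpretation cvec: vector_space "cscale :: complex \<Rightarrow> 'a::chilbert_space \<Rightarrow> 'a"
  by unfold_locales (simp_all add: cscale_add_right cscale_add_left cscale_cscale cscale_one)

lemma csubspace_iff_subspace: "csubspace S \<longleftrightarrow> cvec.subspace S"
  by (simp add: csubspace_def cvec.subspace_def)

lemma ray_eq_span: "ray k = cvec.span {k}"
  by (simp add: ray_def cvec.span_singleton)

lemma csubspace_ray: "csubspace (ray k)"
  by (simp add: csubspace_iff_subspace ray_eq_span)

lemma ray_self: "\<psi> \<in> ray \<psi>"
  by (simp add: ray_eq_span cvec.span_base)

lemma mem_ray_iff: "\<phi> \<in> ray \<psi> \<longleftrightarrow> (\<exists>c. \<phi> = cscale c \<psi>)"
  by (auto simp: ray_def)

lemma additive_cinner_right: "Modules.additive (cinner (z::'a::chilbert_space))"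
  by unfold_locales (metis cinner_add_left cinner_commute complex_cnj_add)

lemmas cinner_zero_right [simp] = Modules.additive.zero[OF additive_cinner_right]

lemma cinner_zero_left [simp]: "cinner 0 (x::'a::chilbert_space) = 0"
  by (subst cinner_commute) simp

lemmas cinner_diff_right = Modules.additive.diff[OF additive_cinner_right]

lemma cinner_cscale_right: "cinner x (cscale c y) = c * cinner x (y::'a::chilbert_space)"
  by (metis cinner_commute cinner_cscale_left complex_cnj_cnj complex_cnj_mult)

lemma cinner_self_eq_0_iff [simp]: "cinner x x = 0 \<longleftrightarrow> x = (0::'a::chilbert_space)"
proof
  assume "cinner x x = 0"
  then have "inner x x = 0" by (simp add: inner_Re_cinner)
  then show "x = 0" by simp
qed simp

lemma continuous_on_cinner_right: "continuous_on UNIV (cinner (k::'a::chilbert_space))"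
proof -
  have "cinner k = (\<lambda>x. Complex (inner k x) (inner (cscale \<i> k) x))"
    by (simp add: fun_eq_iff complex_eq_iff inner_Re_cinner cinner_cscale_left)
  then show ?thesis
    by (simp add: Complex_eq continuous_intros)
qed

lemma continuous_on_cscale_left: "continuous_on UNIV (\<lambda>c. cscale c (k::'a::chilbert_space))"
proof -
  have "cscale c k = Re c *\<^sub>R k + Im c *\<^sub>R cscale \<i> k" for c
  proof -
    have "c = complex_of_real (Re c) + complex_of_real (Im c) * \<i>"
      by (simp add: complex_eq_iff)
    then have "cscale c k =
        cscale (complex_of_real (Re c)) k + cscale (complex_of_real (Im c) * \<i>) k"
      by (metis cscale_add_left)
    then show ?thesis
      by (simp add: scaleR_cscale cscale_cscale)
  qed
  then have "(\<lambda>c. cscale c k) = (\<lambda>c. Re c *\<^sub>R k + Im c *\<^sub>R cscale \<i> k)"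
    by (rule ext)
  then show ?thesis
    by (simp only:) (intro continuous_intros)
qed

lemma proj_unique:
  assumes "csubspace S" and "p \<in> S" and "\<forall>s\<in>S. cinner s (\<psi> - p) = 0"
  shows "proj S \<psi> = p"
  unfolding proj_def
proof (rule the_equality)
  fix q assume q: "q \<in> S \<and> (\<forall>s\<in>S. cinner s (\<psi> - q) = 0)"
  then have "q - p \<in> S"
    using assms by (simp add: csubspace_iff_subspace cvec.subspace_diff)
  then have "cinner (q - p) ((\<psi> - p) - (\<psi> - q)) = 0"
    using assms q by (simp add: cinner_diff_right)
  then show "q = p" by simp
qed (use assms in blast)

lemma proj_eq_self: "csubspace S \<Longrightarrow> x \<in> S \<Longrightarrow> proj S x = x"
  by (rule proj_unique) auto

lemma proj_zero_subspace: "proj {0} x = (0::'a::chilbert_space)"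
  by (rule proj_unique) (auto simp: csubspace_iff_subspace)

lemma proj_ray:
  assumes "k \<noteq> 0"
  shows "proj (ray k) \<phi> = cscale (cinner k \<phi> / cinner k k) k"
  using assms
  by (intro proj_unique csubspace_ray)
    (auto simp: mem_ray_iff cinner_cscale_left cinner_diff_right cinner_cscale_right)

lemma closed_ray:
  assumes "k \<noteq> 0"
  shows "closed (ray k)"
proof -
  have "ray k = {x. x = cscale (cinner k x / cinner k k) k}"
    using assms by (auto simp: mem_ray_iff cinner_cscale_right)
  moreover have "continuous_on UNIV (\<lambda>x. cinner k x / cinner k k)"
    using assms by (intro continuous_on_divide continuous_on_cinner_right continuous_on_const) simp
  then have "continuous_on UNIV (\<lambda>x. cscale (cinner k x / cinner k k) k)"
    by (rule continuous_on_compose2[OF continuous_on_cscale_left]) auto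
  ultimately show ?thesis
    by (simp add: closed_Collect_eq continuous_on_id)
qed

lemma ray_in_closed_subspaces: "k \<noteq> 0 \<Longrightarrow> ray k \<in> closed_subspaces"
  by (simp add: closed_subspaces_def csubspace_ray closed_ray)

lemma ebar_ray_representative:
  assumes "\<psi> \<noteq> 0"
  obtains \<phi> where "\<phi> \<noteq> 0" and "ray \<phi> = ray \<psi>"
    and "ebar (ray \<psi>) S = (norm (proj S \<phi>))\<^sup>2 / (norm \<phi>)\<^sup>2"
proof -
  let ?\<phi> = "SOME \<phi>. \<phi> \<noteq> 0 \<and> ray \<phi> = ray \<psi>"
  have "?\<phi> \<noteq> 0 \<and> ray ?\<phi> = ray \<psi>"
    by (rule someI[of _ \<psi>]) (use assms in auto)
  then show ?thesis
    using that unfolding ebar_def Let_def by blast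
qed

lemma ebar_eq_1_if_mem:
  assumes "csubspace S" and "\<psi> \<noteq> 0" and "\<psi> \<in> S"
  shows "ebar (ray \<psi>) S = 1"
proof -
  obtain \<phi> where \<phi>: "\<phi> \<noteq> 0" "ray \<phi> = ray \<psi>"
    and e: "ebar (ray \<psi>) S = (norm (proj S \<phi>))\<^sup>2 / (norm \<phi>)\<^sup>2"
    using ebar_ray_representative[OF \<open>\<psi> \<noteq> 0\<close>] .
  have "\<phi> \<in> S"
    using ray_self[of \<phi>] assms
    by (auto simp: \<phi>(2) mem_ray_iff csubspace_iff_subspace cvec.subspace_scale)
  then show ?thesis
    using \<phi>(1) e assms(1) by (simp add: proj_eq_self)
qed

lemma ebar_zero_subspace: "ebar r {0::'a::chilbert_space} = 0"
  by (simp add: ebar_def proj_zero_subspace)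

lemma ray_eqE:
  assumes "ray w = ray v"
  obtains c where "v = cscale c w"
proof -
  have "v \<in> ray w"
    using ray_self[of v] assms by simp
  then show ?thesis
    using that by (auto simp: mem_ray_iff)
qed

lemma ebar_ray_eq_1_imp_mem:
  assumes "k \<noteq> 0" and "v \<noteq> 0" and "ebar (ray v) (ray k) = 1"
  shows "v \<in> ray k"
proof -
  obtain w where w: "w \<noteq> 0" "ray w = ray v"
    and e: "ebar (ray v) (ray k) = (norm (proj (ray k) w))\<^sup>2 / (norm w)\<^sup>2"
    using ebar_ray_representative[OF \<open>v \<noteq> 0\<close>] .
  define a where "a = cinner k w / cinner k k"
  define p where "p = cscale a k"
  have "proj (ray k) w = p"
    using \<open>k \<noteq> 0\<close> by (simp add: proj_ray p_def a_def)
  then have "(norm p)\<^sup>2 = (norm w)\<^sup>2"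
    using assms(3) e w(1) by simp
  moreover have "cinner p (w - p) = 0"
    using \<open>k \<noteq> 0\<close>
    by (simp add: p_def a_def cinner_cscale_left cinner_diff_right cinner_cscale_right)
  then have "(norm (p + (w - p)))\<^sup>2 = (norm p)\<^sup>2 + (norm (w - p))\<^sup>2"
    by (intro norm_add_Pythagorean) (simp add: orthogonal_def inner_Re_cinner)
  ultimately have "w = p" by simp
  moreover obtain c where "v = cscale c w"
    using ray_eqE[OF w(2)] .
  ultimately have "v = cscale (c * a) k"
    by (simp add: p_def cscale_cscale)
  then show ?thesis
    by (simp add: mem_ray_iff)
qed

lemma ebar_ray_eq_0_imp_orthogonal:
  assumes "k \<noteq> 0" and "v \<noteq> 0" and "ebar (ray v) (ray k) = 0"
  shows "cinner k v = 0"
proof -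
  obtain w where w: "w \<noteq> 0" "ray w = ray v"
    and e: "ebar (ray v) (ray k) = (norm (proj (ray k) w))\<^sup>2 / (norm w)\<^sup>2"
    using ebar_ray_representative[OF \<open>v \<noteq> 0\<close>] .
  have "cinner k w = 0"
    using assms e w(1) by (simp add: proj_ray)
  moreover obtain c where "v = cscale c w"
    using ray_eqE[OF w(2)] .
  ultimately show ?thesis
    by (simp add: cinner_cscale_right)
qed

lemma semilinear_additive: "semilinear g \<sigma> \<Longrightarrow> Modules.additive g"
  by (simp add: semilinear_def Modules.additive_def)

lemma semilinear_nonzero_if_not_in_range:
  assumes "semilinear g \<sigma>" and "k \<notin> range g"
  shows "k \<noteq> 0"
proof
  assume "k = 0"
  then have "k = g 0"
    using Modules.additive.zero[OF semilinear_additive[OF assms(1)]] by simp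
  with assms(2) show False by blast
qed

lemma semilinear_cscale_mem_range:
  assumes "semilinear g \<sigma>" and "surj \<sigma>"
  shows "cscale c (g x) \<in> range g"
proof -
  obtain d where "c = \<sigma> d"
    using \<open>surj \<sigma>\<close> by (metis surjD)
  then have "cscale c (g x) = g (cscale d x)"
    using assms(1) by (simp add: semilinear_def)
  then show ?thesis by simp
qed

lemma additive_surj_if_nonrange_orthogonal:
  fixes g :: "'h::chilbert_space \<Rightarrow> 'k::chilbert_space"
  assumes "Modules.additive g" and "g \<psi>0 \<noteq> 0"
    and orth: "\<And>k \<psi>. k \<notin> range g \<Longrightarrow> cinner k (g \<psi>) = 0"
  shows "surj g"
proof (rule ccontr)
  assume "\<not> surj g"
  then obtain k where k: "k \<notin> range g" by blast
  have "k + g \<psi>0 \<notin> range g"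
  proof
    assume "k + g \<psi>0 \<in> range g"
    then obtain \<phi> where "k + g \<psi>0 = g \<phi>" by blast
    then have "k = g \<phi> - g \<psi>0"
      by (simp add: eq_diff_eq)
    also have "\<dots> = g (\<phi> - \<psi>0)"
      using \<open>Modules.additive g\<close> by (rule Modules.additive.diff[symmetric])
    finally have "k = g (\<phi> - \<psi>0)" .
    with k show False by blast
  qed
  then have "cinner (k + g \<psi>0) (g \<psi>0) - cinner k (g \<psi>0) = 0"
    using orth k by simp
  then show False
    using \<open>g \<psi>0 \<noteq> 0\<close> by (simp add: cinner_add_left)
qed

context
  fixes g :: "'h::chilbert_space \<Rightarrow> 'k::chilbert_space" and \<sigma> and T :: "'h set" and k :: 'k
  assumes semi: "semilinear g \<sigma>" and sigma_surj: "surj \<sigma>"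
    and nz: "\<And>\<psi>. \<psi> \<noteq> 0 \<Longrightarrow> g \<psi> \<noteq> 0"
    and T: "csubspace T"
    and pullback: "\<And>\<psi>. \<psi> \<noteq> 0 \<Longrightarrow> ebar (ray \<psi>) T = ebar (ray (g \<psi>)) (ray k)"
    and k: "k \<notin> range g"
begin

lemma pullback_of_nonrange_ray_trivial: "T = {0}"
proof -
  have "\<psi> = 0" if "\<psi> \<in> T" for \<psi>
  proof (rule ccontr)
    assume "\<psi> \<noteq> 0"
    then have "ebar (ray (g \<psi>)) (ray k) = 1"
      using pullback[of \<psi>] ebar_eq_1_if_mem[OF T \<open>\<psi> \<noteq> 0\<close> that] by simp
    then have "g \<psi> \<in> ray k"
      using ebar_ray_eq_1_imp_mem semilinear_nonzero_if_not_in_range[OF semi k]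
        nz[OF \<open>\<psi> \<noteq> 0\<close>] by blast
    then obtain a where a: "g \<psi> = cscale a k"
      by (auto simp: mem_ray_iff)
    then have "a \<noteq> 0"
      using nz[OF \<open>\<psi> \<noteq> 0\<close>] by auto
    then have "k = cscale (inverse a) (g \<psi>)"
      by (simp add: a)
    also have "\<dots> \<in> range g"
      by (rule semilinear_cscale_mem_range[OF semi sigma_surj])
    finally show False
      using k by blast
  qed
  then show ?thesis
    using T by (auto simp: csubspace_def)
qed

lemma nonrange_orthogonal_to_range: "cinner k (g \<psi>) = 0"
proof (cases "\<psi> = 0")
  case True
  then show ?thesis
    using Modules.additive.zero[OF semilinear_additive[OF semi]] by simp
next
  case False
  then have "ebar (ray (g \<psi>)) (ray k) = 0"
    using pullback[OF False] by (simp add: pullback_of_nonrange_ray_trivial ebar_zero_subspace)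
  then show ?thesis
    using ebar_ray_eq_0_imp_orthogonal semilinear_nonzero_if_not_in_range[OF semi k]
      nz[OF False] by blast
qed

end

theorem proposition3p11:
  fixes f_low :: "'h::chilbert_space set \<Rightarrow> 'k::chilbert_space set"
    and f_up :: "'k set \<Rightarrow> 'h set"
    and g :: "'h \<Rightarrow> 'k"
    and \<sigma> :: "complex \<Rightarrow> complex"
  assumes nontriv: "\<exists>\<psi>::'h. \<psi> \<noteq> 0"
    and chu: "chu_morphism (rays :: 'h set set) closed_subspaces ebar
                           (rays :: 'k set set) closed_subspaces ebar f_low f_up"
    and semi: "semilinear g \<sigma>"
    and nz: "\<And>\<psi>. \<psi> \<noteq> 0 \<Longrightarrow> g \<psi> \<noteq> 0"
    and induced: "\<And>\<psi>. \<psi> \<noteq> 0 \<Longrightarrow> f_low (ray \<psi>) = ray (g \<psi>)"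
    and sigma_surj: "surj \<sigma>"
  shows "surj g"
proof -
  have chu_up: "\<And>S. S \<in> closed_subspaces \<Longrightarrow> f_up S \<in> closed_subspaces"
    and chu_eval: "\<And>r S. r \<in> rays \<Longrightarrow> S \<in> closed_subspaces \<Longrightarrow>
        ebar r (f_up S) = ebar (f_low r) S"
    using chu unfolding chu_morphism_def by blast+
  have "cinner k (g \<psi>) = 0" if k: "k \<notin> range g" for k \<psi>
  proof -
    have k_ray: "ray k \<in> closed_subspaces"
      using ray_in_closed_subspaces semilinear_nonzero_if_not_in_range[OF semi k] .
    have "ebar (ray \<psi>') (f_up (ray k)) = ebar (ray (g \<psi>')) (ray k)" if "\<psi>' \<noteq> 0" for \<psi>'
      using chu_eval[OF _ k_ray, of "ray \<psi>'"] induced[OF that] that by (auto simp: rays_def)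
    moreover have "csubspace (f_up (ray k))"
      using chu_up[OF k_ray] by (simp add: closed_subspaces_def)
    ultimately show ?thesis
      using nonrange_orthogonal_to_range[OF semi sigma_surj nz _ _ k] by blast
  qed
  moreover obtain \<psi>0 :: 'h where "\<psi>0 \<noteq> 0"
    using nontriv by blast
  ultimately show ?thesis
    using additive_surj_if_nonrange_orthogonal semilinear_additive[OF semi] nz by blast
qed

end
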